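(* Consider the deterministic dividend problem below with constants $k>0$, $\bar\mu>0$, $r>0$. For $\mu<0$ let $\tau_0(\mu)=\frac1k\ln\!\big(\frac{\bar\mu-\mu}{\bar\mu}\big)$ and $x_b(\mu)=-\bar\mu\,\tau_0(\mu)-\frac{\mu}{k}$; for $\mu\ge0$ let $\tau_0(\mu)=0$ and $x_b(\mu)=0$. Then: (a) for $\mu\ge0$ and $x\ge0$, $V(x,\mu)=x+\frac{\bar\mu}{r}+\frac{\mu-\bar\mu}{r+k}$, attained by paying $x$ at time $0$ and thereafter paying out earnings as they arrive ($L_t=x+\int_0^t\mu_s\,ds$); (b) for $\mu<0$: $V(x,\mu)=x$ if $x<x_b(\mu)$, and $V(x,\mu)=x+\max\{0,\;e^{-r\tau_0(\mu)}V(0,0)-x_b(\mu)\}$ if $x\ge x_b(\mu)$; (c) there exists $\mu^*<0$ such that $V(x,\mu)=x$ for all $x\ge0$ whenever $\mu\le\mu^*$ (immediate liquidation is optimal), while for $\mu\ge\mu^*$ and $x\ge x_b(\mu)$ it is optimal to pay $x-x_b(\mu)$ immediately and thereafter all earnings as they arrive, i.e. $L_t=x-x_b(\mu)+\int_{\tau_0(\mu)\wedge t}^t\mu_s\,ds$.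
   Context: Deterministic setting: the profitability is $\mu_t=\bar\mu+(\mu-\bar\mu)e^{-kt}$ (the solution of $d\mu_t=k(\bar\mu-\mu_t)dt$, $\mu_0=\mu\in\mathbb R$), and the cash reserves are $X_t=x+\int_0^t\mu_s\,ds-L_t$ for $x\ge0$, where an admissible dividend process $L$ is a deterministic càdlàg nondecreasing function with $L_{0-}=0$ and $\Delta L_t\le X_{t-}$. The bankruptcy time is $\theta(L)=\inf\{t>0:X_t<0\}$, and $V(x,\mu)=\sup_L\int_0^{\theta(L)}e^{-rt}\,dL_t$ (including a possible jump at time $0$). *)

theory Defs
  imports "HOL-Analysis.Analysis"
begin

definition mu_path :: "real \<Rightarrow> real \<Rightarrow> real \<Rightarrow> real \<Rightarrow> real" where
  "mu_path k mb mu t = mb + (mu - mb) * exp (- k * t)"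

text \<open>Cash reserves X_t = x + int_0^t mu_s ds - L_t.  A dividend process is a function
  L on the reals with L t = 0 for t < 0 (so L_{0-} = 0 and L 0 is the jump at time 0).\<close>
definition reserves :: "real \<Rightarrow> real \<Rightarrow> real \<Rightarrow> real \<Rightarrow> (real \<Rightarrow> real) \<Rightarrow> real \<Rightarrow> real" where
  "reserves k mb mu x L t = x + integral {0..t} (mu_path k mb mu) - L t"

text \<open>Left limit X_{t-} (the earnings integral is continuous in t).\<close>
definition reserves_left :: "real \<Rightarrow> real \<Rightarrow> real \<Rightarrow> real \<Rightarrow> (real \<Rightarrow> real) \<Rightarrow> real \<Rightarrow> real" where
  "reserves_left k mb mu x L t = x + integral {0..t} (mu_path k mb mu) - Lim (at_left t) L"

text \<open>Bankruptcy time theta(L) = inf {t > 0. X_t < 0}, with inf of the empty set = infinity.\<close>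
definition bankruptcy :: "real \<Rightarrow> real \<Rightarrow> real \<Rightarrow> real \<Rightarrow> (real \<Rightarrow> real) \<Rightarrow> ereal" where
  "bankruptcy k mb mu x L = Inf {ereal t | t. 0 < t \<and> reserves k mb mu x L t < 0}"

text \<open>Admissible dividend processes: nondecreasing, cadlag (right-continuous; left limits
  exist by monotonicity), L_{0-} = 0, and Delta L_t \<le> X_{t-} for all times t \<ge> 0 up to
  (and including) bankruptcy.\<close>
definition admissible :: "real \<Rightarrow> real \<Rightarrow> real \<Rightarrow> real \<Rightarrow> (real \<Rightarrow> real) \<Rightarrow> bool" where
  "admissible k mb mu x L \<longleftrightarrow>
     mono L \<and> (\<forall>t<0. L t = 0) \<and> (\<forall>t. continuous (at_right t) L) \<and>
     (\<forall>t\<ge>0. ereal t \<le> bankruptcy k mb mu x L \<longrightarrow>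
        L t - Lim (at_left t) L \<le> reserves_left k mb mu x L t)"

text \<open>Payoff int_{[0, theta]} e^{-r t} dL_t as a Lebesgue--Stieltjes integral w.r.t. the
  measure induced by L (this includes the jump at time 0, since L = 0 on negative times).\<close>
definition payoff :: "real \<Rightarrow> real \<Rightarrow> real \<Rightarrow> real \<Rightarrow> real \<Rightarrow> (real \<Rightarrow> real) \<Rightarrow> ennreal" where
  "payoff r k mb mu x L =
     (\<integral>\<^sup>+ t. ennreal (exp (- r * t)) * indicator {t. 0 \<le> t \<and> ereal t \<le> bankruptcy k mb mu x L} t
        \<partial>interval_measure L)"

definition value_fn :: "real \<Rightarrow> real \<Rightarrow> real \<Rightarrow> real \<Rightarrow> real \<Rightarrow> ennreal" where
  "value_fn r k mb x mu = (SUP L \<in> {L. admissible k mb mu x L}. payoff r k mb mu x L)"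

definition tau0 :: "real \<Rightarrow> real \<Rightarrow> real \<Rightarrow> real" where
  "tau0 k mb mu = (if mu < 0 then (1 / k) * ln ((mb - mu) / mb) else 0)"

definition xb :: "real \<Rightarrow> real \<Rightarrow> real \<Rightarrow> real" where
  "xb k mb mu = (if mu < 0 then - mb * tau0 k mb mu - mu / k else 0)"

definition barrier_strategy :: "real \<Rightarrow> real \<Rightarrow> real \<Rightarrow> real \<Rightarrow> real \<Rightarrow> real" where
  "barrier_strategy k mb mu x t =
     (if t < 0 then 0
      else x - xb k mb mu + integral {min (tau0 k mb mu) t..t} (mu_path k mb mu))"

end

theory Submission
  imports Defs "HOL-Real_Asymp.Real_Asymp"
begin

text \<open>Exchanging the order of integration, the payoff of a strategy L is the integral of
  r exp (-r s) L (min s theta) ds, while admissibility bounds L t by x plus the earnings accumulated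
  up to t. Optimality thus reduces to pointwise domination of L.

  If mu \<ge> 0 the accumulated earnings increase, so paying x at once and then every earning as it
  arrives dominates all admissible strategies. If mu < 0 the accumulated earnings decrease until tau0,
  where they equal -xb. A strategy surviving until tau0 has paid at most x - xb by then and is
  dominated by the barrier strategy, whose payoff is x - xb + exp (-r tau0) V(0,0); a strategy going
  bankrupt earlier pays at most x. The premium exp (-r tau0) V(0,0) - xb of the barrier strategy over
  liquidation is nondecreasing in mu, positive at mu = 0 and tends to -\<infinity>; mu* is a zero of it.\<close>

section \<open>Discounted payment streams\<close>

text \<open>For the cumulative payments f of a strategy this is the discounted total payment
  (see nn_integral_interval_measure_discount). Negative values of f are truncated to 0 by ennreal.\<close>
definition discounted :: "real \<Rightarrow> (real \<Rightarrow> real) \<Rightarrow> ennreal" where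
  "discounted r f = (\<integral>\<^sup>+ s. ennreal (r * exp (- r * s)) * ennreal (f s) * indicator {0..} s \<partial>lborel)"

lemma discounted_mono:
  assumes "\<And>s. 0 \<le> s \<Longrightarrow> f s \<le> g s"
  shows "discounted r f \<le> discounted r g"
  unfolding discounted_def
  by (intro nn_integral_mono) (auto intro!: mult_left_mono ennreal_leI assms split: split_indicator)

lemma discounted_cong:
  assumes "\<And>s. 0 \<le> s \<Longrightarrow> f s = g s"
  shows "discounted r f = discounted r g"
  unfolding discounted_def by (intro nn_integral_cong) (auto simp: assms split: split_indicator)

lemma ennreal_exp_eq_nn_integral:
  fixes r t :: real
  assumes "r > 0"
  shows "ennreal (exp (- r * t)) = (\<integral>\<^sup>+ s. ennreal (r * exp (- r * s)) * indicator {t..} s \<partial>lborel)"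
proof -
  have "(\<integral>\<^sup>+ s. ennreal (r * exp (- r * s)) * indicator {t..} s \<partial>lborel) = 0 - (- exp (- r * t))"
    by (rule nn_integral_FTC_atLeast[where F = "\<lambda>s. - exp (- r * s)"])
       (use assms in \<open>auto intro!: derivative_eq_intros, real_asymp\<close>)
  then show ?thesis by simp
qed

lemma discounted_const:
  assumes "r > 0"
  shows "discounted r (\<lambda>_. c) = ennreal c"
proof -
  have "discounted r (\<lambda>_. c) = (\<integral>\<^sup>+ s. ennreal (r * exp (- r * s)) * indicator {0..} s \<partial>lborel) * ennreal c"
    unfolding discounted_def by (subst nn_integral_multc[symmetric]) (auto intro!: nn_integral_cong simp: ac_simps)
  then show ?thesis using ennreal_exp_eq_nn_integral[OF assms, of 0] by simp
qed

lemma discounted_add: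
  assumes [measurable]: "f \<in> borel_measurable borel" "g \<in> borel_measurable borel"
    and "\<And>s. 0 \<le> s \<Longrightarrow> 0 \<le> f s" "\<And>s. 0 \<le> s \<Longrightarrow> 0 \<le> g s"
  shows "discounted r (\<lambda>s. f s + g s) = discounted r f + discounted r g"
proof -
  have "discounted r (\<lambda>s. f s + g s) = (\<integral>\<^sup>+ s. ennreal (r * exp (- r * s)) * ennreal (f s) * indicator {0..} s
      + ennreal (r * exp (- r * s)) * ennreal (g s) * indicator {0..} s \<partial>lborel)"
    unfolding discounted_def using assms(3,4)
    by (intro nn_integral_cong) (auto simp: ennreal_plus distrib_left split: split_indicator)
  also have "\<dots> = discounted r f + discounted r g"
    unfolding discounted_def by (rule nn_integral_add) measurable
  finally show ?thesis .
qed

lemma discounted_delay: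
  assumes [measurable]: "f \<in> borel_measurable borel" and "r > 0" "0 \<le> T"
  shows "discounted r (\<lambda>s. if s < T then 0 else f (s - T)) = ennreal (exp (- r * T)) * discounted r f"
proof -
  let ?g = "\<lambda>s. ennreal (r * exp (- r * s)) * ennreal (if s < T then 0 else f (s - T)) * indicator {0..} s"
  have "discounted r (\<lambda>s. if s < T then 0 else f (s - T)) = (\<integral>\<^sup>+ u. ?g (T + 1 * u) \<partial>lborel)"
    unfolding discounted_def using nn_integral_real_affine[of ?g 1 T] by simp
  also have "\<dots> = (\<integral>\<^sup>+ u. ennreal (exp (- r * T)) *
      (ennreal (r * exp (- r * u)) * ennreal (f u) * indicator {0..} u) \<partial>lborel)"
  proof (intro nn_integral_cong)
    fix u :: real
    have "r * exp (- r * (T + u)) = exp (- r * T) * (r * exp (- r * u))"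
      by (simp add: algebra_simps exp_add[symmetric])
    then show "?g (T + 1 * u) = ennreal (exp (- r * T)) * (ennreal (r * exp (- r * u)) * ennreal (f u) * indicator {0..} u)"
      using assms by (auto simp: ennreal_mult ac_simps split: split_indicator)
  qed
  also have "\<dots> = ennreal (exp (- r * T)) * discounted r f"
    unfolding discounted_def by (rule nn_integral_cmult) measurable
  finally show ?thesis .
qed

lemma emeasure_interval_measure_Icc_0:
  fixes L :: "real \<Rightarrow> real"
  assumes mono: "mono L" and zero: "\<And>t. t < 0 \<Longrightarrow> L t = 0"
    and right_cont: "\<And>t. continuous (at_right t) L" and "0 \<le> c"
  shows "emeasure (interval_measure L) {0..c} = ennreal (L c)"
proof -
  let ?M = "interval_measure L"
  have mono': "\<And>x y. x \<le> y \<Longrightarrow> L x \<le> L y" using mono by (simp add: monoD)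
  have Ioc: "emeasure ?M {a<..b} = L b - L a" if "a \<le> b" for a b
    by (rule emeasure_interval_measure_Ioc[OF that mono' right_cont])
  have "{-1<..<0::real} = (\<Union>n. {-1<..-1 / real (Suc n)})"
  proof (intro set_eqI iffI)
    fix t :: real assume t: "t \<in> {-1<..<0}"
    obtain n where "1 / real (Suc n) < - t"
      using reals_Archimedean[of "- t"] t by (auto simp: inverse_eq_divide)
    then have "t \<le> -1 / real (Suc n)" by (simp add: field_simps)
    then show "t \<in> (\<Union>n. {-1<..-1 / real (Suc n)})" using t by auto
  next
    fix t assume "t \<in> (\<Union>n. {-1<..-1 / real (Suc n)})"
    then obtain n where n: "-1 < t" "t \<le> -1 / real (Suc n)" by auto
    have "-1 / real (Suc n) < 0" by simp
    with n(2) have "t < 0" by (rule order.strict_trans1)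
    then show "t \<in> {-1<..<0::real}" using n(1) by simp
  qed
  moreover have "emeasure ?M (\<Union>n. {-1<..-1 / real (Suc n)}) = 0"
  proof (rule emeasure_UN_eq_0)
    show "emeasure ?M {-1<..-1 / real (Suc n)} = 0" for n
      using Ioc[of "-1" "-1 / real (Suc n)"] zero by (simp add: field_simps)
  qed auto
  ultimately have "{-1<..<0::real} \<in> null_sets ?M" by (auto simp: null_sets_def)
  moreover have "{0..c} = {-1<..c} - {-1<..<0}" using \<open>0 \<le> c\<close> by auto
  ultimately have "emeasure ?M {0..c} = emeasure ?M {-1<..c}"
    using emeasure_Diff_null_set[of "{-1<..<0}" ?M "{-1<..c}"] by simp
  also have "\<dots> = L c" using Ioc[of "-1" c] \<open>0 \<le> c\<close> zero[of "-1"] by simp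
  finally show ?thesis .
qed

definition stop_at :: "(real \<Rightarrow> real) \<Rightarrow> ereal \<Rightarrow> real \<Rightarrow> real" where
  "stop_at L \<theta> s = L (real_of_ereal (min (ereal s) \<theta>))"

lemma stop_at_infinity [simp]: "stop_at L \<infinity> = L"
  by (simp add: stop_at_def fun_eq_iff)

lemma stopping_time_bounds:
  fixes \<theta> :: ereal
  assumes "0 \<le> \<theta>" "0 \<le> s"
  shows "{t. 0 \<le> t \<and> ereal t \<le> \<theta> \<and> t \<le> s} = {0..real_of_ereal (min (ereal s) \<theta>)}"
    and "0 \<le> real_of_ereal (min (ereal s) \<theta>)"
    and "real_of_ereal (min (ereal s) \<theta>) \<le> s"
    and "ereal (real_of_ereal (min (ereal s) \<theta>)) \<le> \<theta>"
  using assms by (cases \<theta>; auto simp: min_def)+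

text \<open>Writing exp (-r t) as the integral of r exp (-r s) over [t, \<infinity>) and exchanging the order
  of integration turns the Stieltjes integral into an ordinary one.\<close>
lemma nn_integral_interval_measure_discount:
  fixes L :: "real \<Rightarrow> real" and \<theta> :: ereal
  assumes mono: "mono L" and zero: "\<And>t. t < 0 \<Longrightarrow> L t = 0"
    and right_cont: "\<And>t. continuous (at_right t) L" and r: "r > 0" and \<theta>: "0 \<le> \<theta>"
  shows "(\<integral>\<^sup>+ t. ennreal (exp (- r * t)) * indicator {t. 0 \<le> t \<and> ereal t \<le> \<theta>} t \<partial>interval_measure L)
    = discounted r (stop_at L \<theta>)"
proof -
  let ?M = "interval_measure L"
  let ?A = "{t. 0 \<le> t \<and> ereal t \<le> \<theta>}"
  let ?F = "\<lambda>t s. ennreal (r * exp (- r * s)) * indicator {p. fst p \<le> snd p \<and> fst p \<in> ?A} (t, s)"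
  interpret M: sigma_finite_measure ?M
    using mono right_cont by (intro sigma_finite_interval_measure) (auto dest: monoD)
  interpret pair_sigma_finite ?M lborel ..
  have [measurable]: "{p. fst p \<le> snd p \<and> fst p \<in> ?A} \<in> sets (?M \<Otimes>\<^sub>M lborel)"
  proof -
    have "Measurable.pred (?M \<Otimes>\<^sub>M lborel) (\<lambda>p. fst p \<le> snd p \<and> 0 \<le> fst p \<and> ereal (fst p) \<le> \<theta>)"
      by measurable
    then show ?thesis by (simp add: pred_def space_pair_measure)
  qed
  have inner_s: "ennreal (exp (- r * t)) * indicator ?A t = (\<integral>\<^sup>+ s. ?F t s \<partial>lborel)" for t
  proof -
    have "ennreal (exp (- r * t)) * indicator ?A t
        = (\<integral>\<^sup>+ s. ennreal (r * exp (- r * s)) * indicator {t..} s \<partial>lborel) * indicator ?A t"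
      by (simp only: ennreal_exp_eq_nn_integral[OF r])
    also have "\<dots> = (\<integral>\<^sup>+ s. ennreal (r * exp (- r * s)) * indicator {t..} s * indicator ?A t \<partial>lborel)"
      by (rule nn_integral_multc[symmetric]) measurable
    also have "\<dots> = (\<integral>\<^sup>+ s. ?F t s \<partial>lborel)"
      by (intro nn_integral_cong) (auto split: split_indicator)
    finally show ?thesis .
  qed
  have inner_t: "(\<integral>\<^sup>+ t. ?F t s \<partial>?M)
      = ennreal (r * exp (- r * s)) * ennreal (stop_at L \<theta> s) * indicator {0..} s" for s
  proof (cases "0 \<le> s")
    case True
    have "(\<integral>\<^sup>+ t. ?F t s \<partial>?M)
        = ennreal (r * exp (- r * s)) * emeasure ?M {t. 0 \<le> t \<and> ereal t \<le> \<theta> \<and> t \<le> s}"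
      by (subst nn_integral_cmult_indicator[symmetric]) (auto intro!: nn_integral_cong split: split_indicator)
    then show ?thesis using True stopping_time_bounds[OF \<theta> True]
      by (simp add: stop_at_def emeasure_interval_measure_Icc_0[OF mono zero right_cont])
  next
    case False
    then have "?F t s = 0" for t by (simp add: indicator_def)
    then show ?thesis using False by simp
  qed
  have "(\<integral>\<^sup>+ t. ennreal (exp (- r * t)) * indicator ?A t \<partial>?M) = (\<integral>\<^sup>+ t. (\<integral>\<^sup>+ s. ?F t s \<partial>lborel) \<partial>?M)"
    by (simp only: inner_s)
  also have "\<dots> = (\<integral>\<^sup>+ s. (\<integral>\<^sup>+ t. ?F t s \<partial>?M) \<partial>lborel)"
    by (rule Fubini'[symmetric]) measurable
  also have "\<dots> = discounted r (stop_at L \<theta>)"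
    by (simp only: inner_t discounted_def)
  finally show ?thesis .
qed

section \<open>Cumulative earnings\<close>

definition earnings :: "real \<Rightarrow> real \<Rightarrow> real \<Rightarrow> real \<Rightarrow> real" where
  "earnings k mb mu t = mb * t + (mu - mb) * (1 - exp (- k * t)) / k"

lemma earnings_0 [simp]: "earnings k mb mu 0 = 0"
  by (simp add: earnings_def)

lemma earnings_measurable [measurable]: "earnings k mb mu \<in> borel_measurable borel"
  unfolding earnings_def by measurable

lemma earnings_has_real_derivative:
  "k \<noteq> 0 \<Longrightarrow> (earnings k mb mu has_real_derivative mu_path k mb mu t) (at t)"
  unfolding earnings_def mu_path_def by (auto intro!: derivative_eq_intros simp: field_simps)

lemma isCont_earnings: "k \<noteq> 0 \<Longrightarrow> isCont (earnings k mb mu) t"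
  using earnings_has_real_derivative DERIV_isCont by blast

lemma integral_mu_path:
  assumes "k \<noteq> 0" "a \<le> b"
  shows "integral {a..b} (mu_path k mb mu) = earnings k mb mu b - earnings k mb mu a"
proof (rule integral_unique, rule fundamental_theorem_of_calculus[OF assms(2)])
  show "(earnings k mb mu has_vector_derivative mu_path k mb mu t) (at t within {a..b})" for t
    using earnings_has_real_derivative[OF assms(1)]
    by (metis has_real_derivative_iff_has_vector_derivative has_vector_derivative_at_within)
qed

lemma integral_mu_path_from_0:
  "k \<noteq> 0 \<Longrightarrow> 0 \<le> t \<Longrightarrow> integral {0..t} (mu_path k mb mu) = earnings k mb mu t"
  using integral_mu_path[of k 0 t] by simp

lemma earnings_mono:
  assumes "k \<noteq> 0" "a \<le> b" "\<And>t. a \<le> t \<Longrightarrow> t \<le> b \<Longrightarrow> 0 \<le> mu_path k mb mu t"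
  shows "earnings k mb mu a \<le> earnings k mb mu b"
  using DERIV_nonneg_imp_nondecreasing[OF assms(2)] earnings_has_real_derivative[OF assms(1)] assms(3)
  by blast

lemma earnings_antimono:
  assumes "k \<noteq> 0" "a \<le> b" "\<And>t. a \<le> t \<Longrightarrow> t \<le> b \<Longrightarrow> mu_path k mb mu t \<le> 0"
  shows "earnings k mb mu b \<le> earnings k mb mu a"
  using DERIV_nonpos_imp_nonincreasing[OF assms(2)] earnings_has_real_derivative[OF assms(1)] assms(3)
  by blast

lemma earnings_strict_antimono:
  assumes "k \<noteq> 0" "a < b" "\<And>t. a \<le> t \<Longrightarrow> t \<le> b \<Longrightarrow> mu_path k mb mu t < 0"
  shows "earnings k mb mu b < earnings k mb mu a"
  using DERIV_neg_imp_decreasing[OF assms(2)] earnings_has_real_derivative[OF assms(1)] assms(3)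
  by blast

lemma discounted_earnings:
  assumes k: "k > 0" and r: "r > 0" and nonneg: "\<And>s. 0 \<le> s \<Longrightarrow> 0 \<le> x + earnings k mb mu s"
  shows "discounted r (\<lambda>s. x + earnings k mb mu s) = ennreal (x + mb / r + (mu - mb) / (r + k))"
proof -
  define f where "f s = r * exp (- r * s) * (x + earnings k mb mu s)" for s
  define a where "a = x + mb / r + (mu - mb) / k"
  define c where "c = (mu - mb) * r / k / (r + k)"
  define F where "F s = - a * exp (- r * s) - mb * s * exp (- r * s) + c * (exp (- r * s) * exp (- k * s))" for s
  have nz: "r + k \<noteq> 0" "k \<noteq> 0" "r \<noteq> 0" using r k by auto
  have ra: "r * a - mb = r * x + r * (mu - mb) / k"
    using nz unfolding a_def by (simp add: algebra_simps)
  have ck: "c * (r + k) = r * (mu - mb) / k"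
    using nz unfolding c_def by simp
  have F0: "0 - F 0 = x + mb / r + (mu - mb) / (r + k)"
    using nz unfolding F_def a_def c_def by (simp add: divide_simps) (simp add: algebra_simps)
  have "(F has_real_derivative f s) (at s)" for s
  proof -
    have "(F has_real_derivative
        (r * a - mb) * exp (- r * s) + mb * r * s * exp (- r * s) - c * (r + k) * (exp (- r * s) * exp (- k * s)))
        (at s)"
      unfolding F_def by (auto intro!: derivative_eq_intros simp: algebra_simps)
    also have "(r * a - mb) * exp (- r * s) + mb * r * s * exp (- r * s) - c * (r + k) * (exp (- r * s) * exp (- k * s))
        = f s"
      unfolding ra ck f_def earnings_def using k by (simp add: field_simps)
    finally show ?thesis .
  qed
  moreover have "(F \<longlongrightarrow> 0) at_top"
    unfolding F_def using r k by real_asymp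
  ultimately have "(\<integral>\<^sup>+ s. ennreal (f s) * indicator {0..} s \<partial>lborel) = 0 - F 0"
    by (intro nn_integral_FTC_atLeast) (use nonneg r in \<open>auto simp: f_def earnings_def\<close>)
  moreover have "discounted r (\<lambda>s. x + earnings k mb mu s) = (\<integral>\<^sup>+ s. ennreal (f s) * indicator {0..} s \<partial>lborel)"
    unfolding discounted_def f_def using r nonneg
    by (intro nn_integral_cong) (auto simp: ennreal_mult split: split_indicator)
  ultimately show ?thesis using F0 by simp
qed

lemma mu_path_nonneg:
  assumes "k > 0" "mb > 0" "mu \<ge> 0" "t \<ge> 0"
  shows "0 \<le> mu_path k mb mu t"
proof -
  have "mu_path k mb mu t = mb * (1 - exp (- k * t)) + mu * exp (- k * t)"
    by (simp add: mu_path_def algebra_simps)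
  moreover have "exp (- k * t) \<le> 1" using assms by simp
  ultimately show ?thesis using assms by simp
qed

lemma exp_tau0:
  assumes "k > 0" "mb > 0" "mu < 0"
  shows "exp (- k * tau0 k mb mu) = mb / (mb - mu)"
  using assms by (simp add: tau0_def exp_minus)

lemma tau0_pos:
  assumes "k > 0" "mb > 0" "mu < 0"
  shows "tau0 k mb mu > 0"
  using assms by (simp add: tau0_def)

lemma mu_path_sign:
  assumes "k > 0" "mb > 0" "mu < 0"
  shows "t \<le> tau0 k mb mu \<Longrightarrow> mu_path k mb mu t \<le> 0"
    and "t < tau0 k mb mu \<Longrightarrow> mu_path k mb mu t < 0"
    and "tau0 k mb mu \<le> t \<Longrightarrow> 0 \<le> mu_path k mb mu t"
proof -
  let ?T = "tau0 k mb mu"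
  have e: "mb - mu = mb / exp (- k * ?T)"
    using exp_tau0[OF assms] assms by (simp add: field_simps)
  have d: "exp (k * (?T - t)) = exp (- k * t) / exp (- k * ?T)"
    by (simp add: exp_diff[symmetric] algebra_simps)
  have "mu_path k mb mu t = mb - (mb - mu) * exp (- k * t)"
    by (simp add: mu_path_def algebra_simps)
  also have "\<dots> = mb * (1 - exp (k * (?T - t)))"
    unfolding e d by (simp add: algebra_simps)
  finally have mu: "mu_path k mb mu t = mb * (1 - exp (k * (?T - t)))" .
  show "t \<le> ?T \<Longrightarrow> mu_path k mb mu t \<le> 0"
    and "t < ?T \<Longrightarrow> mu_path k mb mu t < 0"
    and "?T \<le> t \<Longrightarrow> 0 \<le> mu_path k mb mu t"
    unfolding mu using assms by (simp_all add: mult_le_0_iff mult_less_0_iff)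
qed

lemma earnings_tau0:
  assumes "k > 0" "mb > 0" "mu < 0"
  shows "earnings k mb mu (tau0 k mb mu) = - xb k mb mu"
proof -
  have "(mu - mb) * (1 - mb / (mb - mu)) = mu" using assms by (simp add: field_simps)
  then show ?thesis using exp_tau0[OF assms] assms by (simp add: earnings_def xb_def)
qed

text \<open>The profitability vanishes at tau0, so from then on it follows the path started at 0.\<close>
lemma earnings_after_tau0:
  assumes "k > 0" "mb > 0" "mu < 0"
  shows "earnings k mb mu (tau0 k mb mu + s) - earnings k mb mu (tau0 k mb mu) = earnings k mb 0 s"
proof -
  let ?T = "tau0 k mb mu"
  have eT: "(mu - mb) * exp (- k * ?T) = - mb"
    using exp_tau0[OF assms] assms by (simp add: field_simps)
  have "exp (- k * (?T + s)) = exp (- k * ?T) * exp (- k * s)"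
    by (simp add: exp_add[symmetric] algebra_simps)
  then have "earnings k mb mu (?T + s) - earnings k mb mu ?T
      = mb * s + ((mu - mb) * exp (- k * ?T)) * (1 - exp (- k * s)) / k"
    using assms by (simp add: earnings_def field_simps)
  also have "\<dots> = earnings k mb 0 s"
    unfolding eT by (simp add: earnings_def)
  finally show ?thesis .
qed

section \<open>Admissible strategies\<close>

lemma bankruptcy_nonneg: "0 \<le> bankruptcy k mb mu x L"
  unfolding bankruptcy_def by (rule Inf_greatest) auto

lemma bankruptcy_le: "0 < t \<Longrightarrow> reserves k mb mu x L t < 0 \<Longrightarrow> bankruptcy k mb mu x L \<le> ereal t"
  unfolding bankruptcy_def by (rule Inf_lower) auto

lemma bankruptcy_eq_infinity:
  "(\<And>t. 0 < t \<Longrightarrow> 0 \<le> reserves k mb mu x L t) \<Longrightarrow> bankruptcy k mb mu x L = \<infinity>"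
  unfolding bankruptcy_def by (force simp: top_ereal_def[symmetric] not_less)

text \<open>The earnings are continuous, so the constraint on the jump of L at t is just a bound on L t.\<close>
lemma admissible_iff:
  "admissible k mb mu x L \<longleftrightarrow> mono L \<and> (\<forall>t<0. L t = 0) \<and> (\<forall>t. continuous (at_right t) L) \<and>
     (\<forall>t\<ge>0. ereal t \<le> bankruptcy k mb mu x L \<longrightarrow> L t \<le> x + integral {0..t} (mu_path k mb mu))"
  unfolding admissible_def reserves_left_def by force

lemma admissibleI:
  assumes "mono L" "\<And>t. t < 0 \<Longrightarrow> L t = 0" "\<And>t. continuous (at_right t) L"
    "\<And>t. 0 \<le> t \<Longrightarrow> ereal t \<le> bankruptcy k mb mu x L \<Longrightarrow> L t \<le> x + integral {0..t} (mu_path k mb mu)"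
  shows "admissible k mb mu x L"
  using assms by (simp add: admissible_iff)

lemma admissible_nonneg:
  assumes "admissible k mb mu x L"
  shows "0 \<le> L t"
  using assms monoD[of L "min t (-1)" t] by (auto simp: admissible_iff)

lemma payoff_eq_discounted:
  assumes "admissible k mb mu x L" "r > 0"
  shows "payoff r k mb mu x L = discounted r (stop_at L (bankruptcy k mb mu x L))"
  unfolding payoff_def using assms bankruptcy_nonneg
  by (intro nn_integral_interval_measure_discount) (auto simp: admissible_iff)

lemma payoff_le_discounted:
  assumes adm: "admissible k mb mu x L" and k: "k > 0" and r: "r > 0"
    and bound: "\<And>c s. 0 \<le> c \<Longrightarrow> c \<le> s \<Longrightarrow> ereal c \<le> bankruptcy k mb mu x L \<Longrightarrow>
      L c \<le> x + earnings k mb mu c \<Longrightarrow> L c \<le> g s"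
  shows "payoff r k mb mu x L \<le> discounted r g"
  unfolding payoff_eq_discounted[OF adm r]
proof (rule discounted_mono)
  fix s :: real assume "0 \<le> s"
  let ?c = "real_of_ereal (min (ereal s) (bankruptcy k mb mu x L))"
  note c = stopping_time_bounds(2-4)[OF bankruptcy_nonneg \<open>0 \<le> s\<close>]
  have "L ?c \<le> x + integral {0..?c} (mu_path k mb mu)"
    using adm c(1,3) by (auto simp: admissible_iff)
  then have "L ?c \<le> x + earnings k mb mu ?c"
    using integral_mu_path_from_0[of k ?c] k c(1) by simp
  then show "stop_at L (bankruptcy k mb mu x L) s \<le> g s"
    unfolding stop_at_def using bound c by blast
qed

lemma payoff_never_bankrupt:
  assumes "admissible k mb mu x L" "r > 0" "bankruptcy k mb mu x L = \<infinity>"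
  shows "payoff r k mb mu x L = discounted r L"
  using payoff_eq_discounted[OF assms(1,2)] assms(3) by simp

lemma mono_extend_by_zero:
  assumes "\<And>a b. 0 \<le> a \<Longrightarrow> a \<le> b \<Longrightarrow> g a \<le> g b" "0 \<le> g 0"
  shows "mono (\<lambda>t::real. if t < 0 then 0 else g t)"
proof (intro monoI)
  fix a b :: real
  assume "a \<le> b"
  then show "(if a < 0 then 0 else g a) \<le> (if b < 0 then 0 else g b)"
    using assms(1)[of a b] assms(1)[of 0 b] assms(2) by auto
qed

lemma continuous_at_right_extend_by_zero:
  fixes g :: "real \<Rightarrow> real"
  assumes "isCont g t"
  shows "continuous (at_right t) (\<lambda>t. if t < 0 then 0 else g t)"
proof (cases "t < 0")
  case True
  have "eventually (\<lambda>s. 0 = (if s < 0 then 0 else g s)) (at_right t)"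
    using True by (auto simp: eventually_at_right_field intro!: exI[of _ 0])
  then have "((\<lambda>t. if t < 0 then 0 else g t) \<longlongrightarrow> 0) (at_right t)"
    by (rule Lim_transform_eventually[OF tendsto_const])
  then show ?thesis using True by (simp add: continuous_within)
next
  case False
  have "eventually (\<lambda>s. g s = (if s < 0 then 0 else g s)) (at_right t)"
    using False by (auto simp: eventually_at_right_field intro!: exI[of _ "t + 1"])
  moreover have "(g \<longlongrightarrow> g t) (at_right t)"
    using assms by (simp add: isCont_def filterlim_at_split)
  ultimately have "((\<lambda>t. if t < 0 then 0 else g t) \<longlongrightarrow> g t) (at_right t)"
    by (rule Lim_transform_eventually[rotated])
  then show ?thesis using False by (simp add: continuous_within)
qed

lemma payoff_le_value_fn:
  "admissible k mb mu x L \<Longrightarrow> payoff r k mb mu x L \<le> value_fn r k mb x mu"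
  unfolding value_fn_def by (auto intro!: SUP_upper)

lemma value_fn_le:
  "(\<And>L. admissible k mb mu x L \<Longrightarrow> payoff r k mb mu x L \<le> c) \<Longrightarrow> value_fn r k mb x mu \<le> c"
  unfolding value_fn_def by (auto intro!: SUP_least)

section \<open>Nonnegative initial profitability\<close>

lemma value_fn_nonneg_profitability:
  assumes k: "k > 0" and mb: "mb > 0" and r: "r > 0" and mu: "0 \<le> mu" and x: "0 \<le> x"
  defines "L \<equiv> \<lambda>t. if t < 0 then 0 else x + integral {0..t} (mu_path k mb mu)"
  shows "admissible k mb mu x L"
    and "payoff r k mb mu x L = ennreal (x + mb / r + (mu - mb) / (r + k))"
    and "value_fn r k mb x mu = ennreal (x + mb / r + (mu - mb) / (r + k))"
proof -
  have "k \<noteq> 0" using k by simp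
  have L: "L = (\<lambda>t. if t < 0 then 0 else x + earnings k mb mu t)"
    unfolding L_def by (auto simp: fun_eq_iff integral_mu_path_from_0[OF \<open>k \<noteq> 0\<close>])
  have earnings_mono: "earnings k mb mu a \<le> earnings k mb mu b" if "0 \<le> a" "a \<le> b" for a b
    using earnings_mono[OF \<open>k \<noteq> 0\<close> that(2)] mu_path_nonneg[OF k mb mu] that by simp
  have "bankruptcy k mb mu x L = \<infinity>"
    by (rule bankruptcy_eq_infinity) (simp add: reserves_def L_def)
  moreover show adm: "admissible k mb mu x L"
  proof (rule admissibleI)
    show "mono L"
      unfolding L by (rule mono_extend_by_zero) (use earnings_mono x in auto)
    show "continuous (at_right t) L" for t
      unfolding L by (intro continuous_at_right_extend_by_zero continuous_intros isCont_earnings \<open>k \<noteq> 0\<close>)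
  qed (simp_all add: L_def)
  moreover have formula: "discounted r (\<lambda>s. x + earnings k mb mu s) = ennreal (x + mb / r + (mu - mb) / (r + k))"
    using earnings_mono[of 0] x by (intro discounted_earnings[OF k r]) simp
  moreover have "discounted r L = discounted r (\<lambda>s. x + earnings k mb mu s)"
    unfolding L by (rule discounted_cong) simp
  ultimately show payoff: "payoff r k mb mu x L = ennreal (x + mb / r + (mu - mb) / (r + k))"
    using payoff_never_bankrupt[OF adm r] by simp
  show "value_fn r k mb x mu = ennreal (x + mb / r + (mu - mb) / (r + k))"
  proof (rule antisym)
    show "value_fn r k mb x mu \<le> ennreal (x + mb / r + (mu - mb) / (r + k))"
      unfolding formula[symmetric]
    proof (intro value_fn_le payoff_le_discounted[OF _ k r])
      fix L' c s
      assume "0 \<le> c" "c \<le> s" "L' c \<le> x + earnings k mb mu c"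
      then show "L' c \<le> x + earnings k mb mu s" using earnings_mono[of c s] by simp
    qed
    show "ennreal (x + mb / r + (mu - mb) / (r + k)) \<le> value_fn r k mb x mu"
      using payoff_le_value_fn[OF adm, of r] payoff by simp
  qed
qed

section \<open>Negative initial profitability\<close>

lemma value_at_zero_pos:
  fixes k mb r :: real
  assumes "0 < k" "0 < mb" "0 < r"
  shows "0 < mb / r - mb / (r + k)"
proof -
  have "mb / (r + k) < mb / r" by (rule frac_less2) (use assms in auto)
  then show ?thesis by simp
qed

locale negative_profitability =
  fixes k mb r mu :: real
  assumes k: "k > 0" and mb: "mb > 0" and r: "r > 0" and mu: "mu < 0"
begin

abbreviation "T \<equiv> tau0 k mb mu"
abbreviation "X \<equiv> xb k mb mu"
abbreviation "I \<equiv> earnings k mb mu"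
text \<open>V0 is the value V(0, 0), see value_fn_zero_zero.\<close>
abbreviation "V0 \<equiv> mb / r - mb / (r + k)"

lemma k_neq_0: "k \<noteq> 0"
  using k by simp

lemma T_pos: "0 < T"
  using tau0_pos[OF k mb mu] .

lemma earnings_T: "I T = - X"
  using earnings_tau0[OF k mb mu] .

lemma earnings_antimono_before_T: "0 \<le> a \<Longrightarrow> a \<le> b \<Longrightarrow> b \<le> T \<Longrightarrow> I b \<le> I a"
  using earnings_antimono[OF k_neq_0] mu_path_sign(1)[OF k mb mu] by auto

lemma earnings_mono_after_T: "T \<le> a \<Longrightarrow> a \<le> b \<Longrightarrow> I a \<le> I b"
  using earnings_mono[OF k_neq_0] mu_path_sign(3)[OF k mb mu] by auto

lemma earnings_nonpos_before_T: "0 \<le> c \<Longrightarrow> c \<le> T \<Longrightarrow> I c \<le> 0"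
  using earnings_antimono_before_T[of 0 c] by simp

lemma earnings_neg_before_T: "0 < s \<Longrightarrow> s < T \<Longrightarrow> I s < 0"
  using earnings_strict_antimono[OF k_neq_0, of 0 s mb mu] mu_path_sign(2)[OF k mb mu] by fastforce

lemma xb_pos: "0 < X"
  using earnings_antimono_before_T[of "T / 2" T] earnings_neg_before_T[of "T / 2"] T_pos earnings_T
  by simp

lemma earnings_zero_profitability_nonneg: "0 \<le> s \<Longrightarrow> 0 \<le> earnings k mb 0 s"
  using earnings_mono[OF k_neq_0, of 0 s mb 0] mu_path_nonneg[OF k mb, of 0] by simp

lemma liquidation:
  assumes "0 \<le> x"
  shows "admissible k mb mu x (\<lambda>t. if t < 0 then 0 else x)"
    and "payoff r k mb mu x (\<lambda>t. if t < 0 then 0 else x) = ennreal x"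
proof -
  let ?L = "\<lambda>t::real. if t < 0 then 0 else x"
  show adm: "admissible k mb mu x ?L"
  proof (rule admissibleI)
    fix t :: real assume t: "0 \<le> t" "ereal t \<le> bankruptcy k mb mu x ?L"
    show "?L t \<le> x + integral {0..t} (mu_path k mb mu)"
    proof (cases "t = 0")
      case False
      text \<open>After the payment of x at time 0 the reserves are the earnings, which are negative
        right away; so bankruptcy occurs at time 0.\<close>
      define s where "s = min t T / 2"
      have s: "0 < s" "s < T" "s < t" using False t T_pos by (auto simp: s_def)
      then have "reserves k mb mu x ?L s < 0"
        using earnings_neg_before_T[OF s(1,2)] by (simp add: reserves_def integral_mu_path_from_0[OF k_neq_0])
      then have "bankruptcy k mb mu x ?L \<le> ereal s" using bankruptcy_le s by blast
      then show ?thesis using t s by (meson ereal_less_eq(3) leD order_trans)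
    qed simp
  qed (use assms in \<open>auto intro: mono_extend_by_zero continuous_at_right_extend_by_zero\<close>)
  have "payoff r k mb mu x ?L = discounted r (\<lambda>_. x)"
    unfolding payoff_eq_discounted[OF adm r]
  proof (rule discounted_cong)
    fix s :: real assume "0 \<le> s"
    then show "stop_at ?L (bankruptcy k mb mu x ?L) s = x"
      using stopping_time_bounds(2)[OF bankruptcy_nonneg \<open>0 \<le> s\<close>, of k mb mu x ?L]
      by (simp add: stop_at_def)
  qed
  then show "payoff r k mb mu x ?L = ennreal x"
    using discounted_const[OF r] by simp
qed

lemma barrier_strategy_eq:
  "barrier_strategy k mb mu x = (\<lambda>t. if t < 0 then 0 else x - X + I t - I (min T t))"
  by (auto simp: fun_eq_iff barrier_strategy_def integral_mu_path[OF k_neq_0])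

lemma barrier_strategy_before_T: "0 \<le> t \<Longrightarrow> t \<le> T \<Longrightarrow> barrier_strategy k mb mu x t = x - X"
  by (simp add: barrier_strategy_eq min_def)

lemma barrier_strategy_after_T: "T \<le> t \<Longrightarrow> barrier_strategy k mb mu x t = x + I t"
  using T_pos earnings_T by (simp add: barrier_strategy_eq min_def)

lemma barrier_strategy_ge: "0 \<le> t \<Longrightarrow> x - X \<le> barrier_strategy k mb mu x t"
  using barrier_strategy_before_T barrier_strategy_after_T earnings_mono_after_T[of T t] earnings_T
  by (cases "t \<le> T") auto

lemma barrier_strategy_neg: "t < 0 \<Longrightarrow> barrier_strategy k mb mu x t = 0"
  by (simp add: barrier_strategy_def)

lemma barrier_strategy_mono:
  assumes "X \<le> x"
  shows "mono (barrier_strategy k mb mu x)"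
proof (rule monoI)
  fix a b :: real
  assume "a \<le> b"
  consider "b < 0" | "a < 0" "0 \<le> b" | "0 \<le> a" "a \<le> T" | "T \<le> a"
    by linarith
  then show "barrier_strategy k mb mu x a \<le> barrier_strategy k mb mu x b"
  proof cases
    case 1
    then show ?thesis using \<open>a \<le> b\<close> by (simp add: barrier_strategy_neg)
  next
    case 2
    then show ?thesis using assms barrier_strategy_ge[of b x] by (simp add: barrier_strategy_neg)
  next
    case 3
    then show ?thesis using \<open>a \<le> b\<close> barrier_strategy_ge[of b x] by (simp add: barrier_strategy_before_T)
  next
    case 4
    then show ?thesis using \<open>a \<le> b\<close> earnings_mono_after_T[of a b] by (simp add: barrier_strategy_after_T)
  qed
qed

lemma reserves_barrier_strategy:
  "0 \<le> t \<Longrightarrow> reserves k mb mu x (barrier_strategy k mb mu x) t = X + I (min T t)"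
  by (simp add: reserves_def barrier_strategy_eq integral_mu_path_from_0[OF k_neq_0])

lemma reserves_barrier_strategy_nonneg: "0 \<le> t \<Longrightarrow> 0 \<le> reserves k mb mu x (barrier_strategy k mb mu x) t"
  using earnings_antimono_before_T[of "min T t" T] T_pos earnings_T
  by (simp add: reserves_barrier_strategy)

lemma bankruptcy_barrier_strategy: "bankruptcy k mb mu x (barrier_strategy k mb mu x) = \<infinity>"
  by (simp add: bankruptcy_eq_infinity reserves_barrier_strategy_nonneg)

lemma barrier_strategy_admissible:
  assumes "X \<le> x"
  shows "admissible k mb mu x (barrier_strategy k mb mu x)"
proof (rule admissibleI)
  show "mono (barrier_strategy k mb mu x)" using barrier_strategy_mono[OF assms] .
  show "continuous (at_right t) (barrier_strategy k mb mu x)" for t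
    unfolding barrier_strategy_eq
    by (intro continuous_at_right_extend_by_zero continuous_intros isCont_earnings[OF k_neq_0]
        isCont_o2[where g = I, OF _ isCont_earnings[OF k_neq_0]])
  show "barrier_strategy k mb mu x t \<le> x + integral {0..t} (mu_path k mb mu)" if "0 \<le> t" for t
    using reserves_barrier_strategy_nonneg[OF that, of x] by (simp add: reserves_def)
qed (simp add: barrier_strategy_neg)

lemma payoff_barrier_strategy:
  assumes "X \<le> x"
  shows "payoff r k mb mu x (barrier_strategy k mb mu x) = ennreal (x - X + exp (- r * T) * V0)"
proof -
  let ?delayed = "\<lambda>s. if s < T then 0 else earnings k mb 0 (s - T)"
  have "payoff r k mb mu x (barrier_strategy k mb mu x) = discounted r (barrier_strategy k mb mu x)"
    by (rule payoff_never_bankrupt[OF barrier_strategy_admissible[OF assms] r bankruptcy_barrier_strategy])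
  also have "\<dots> = discounted r (\<lambda>s. (x - X) + ?delayed s)"
  proof (rule discounted_cong)
    fix s :: real assume "0 \<le> s"
    show "barrier_strategy k mb mu x s = (x - X) + ?delayed s"
    proof (cases "s < T")
      case False
      then show ?thesis using earnings_after_tau0[OF k mb mu, of "s - T"] earnings_T
        by (simp add: barrier_strategy_after_T)
    qed (simp add: barrier_strategy_before_T \<open>0 \<le> s\<close>)
  qed
  also have "\<dots> = discounted r (\<lambda>_. x - X) + discounted r ?delayed"
    using assms earnings_zero_profitability_nonneg by (intro discounted_add) auto
  also have "discounted r ?delayed = ennreal (exp (- r * T)) * discounted r (\<lambda>s. 0 + earnings k mb 0 s)"
    using discounted_delay[OF _ r, of "earnings k mb 0" T] T_pos by simp
  also have "discounted r (\<lambda>s. 0 + earnings k mb 0 s) = ennreal V0"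
    using discounted_earnings[OF k r, of 0 mb 0] earnings_zero_profitability_nonneg by simp
  finally show ?thesis
    using discounted_const[OF r] assms value_at_zero_pos[OF k mb r]
    by (simp add: ennreal_mult ennreal_plus)
qed

text \<open>A strategy surviving until tau0 has paid at most x - xb by then, and afterwards at most the
  earnings; so the barrier strategy dominates it.\<close>
lemma payoff_le_if_survives_tau0:
  assumes "0 \<le> x" and adm: "admissible k mb mu x L" and survives: "ereal T \<le> bankruptcy k mb mu x L"
  shows "X \<le> x" and "payoff r k mb mu x L \<le> ennreal (x - X + exp (- r * T) * V0)"
proof -
  have "L T \<le> x + integral {0..T} (mu_path k mb mu)"
    using adm survives T_pos by (simp add: admissible_iff)
  then have L_T: "L T \<le> x - X"
    using earnings_T integral_mu_path_from_0[OF k_neq_0, of T mb mu] T_pos by simp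
  then show "X \<le> x" using admissible_nonneg[OF adm, of T] by simp
  have "payoff r k mb mu x L \<le> discounted r (barrier_strategy k mb mu x)"
  proof (rule payoff_le_discounted[OF adm k r])
    fix c s
    assume c: "0 \<le> c" "c \<le> s" and L_c: "L c \<le> x + I c"
    show "L c \<le> barrier_strategy k mb mu x s"
    proof (cases "c \<le> T")
      case True
      then have "L c \<le> L T" using adm by (simp add: admissible_iff monoD)
      then show ?thesis using L_T barrier_strategy_ge[of s x] c by simp
    next
      case False
      then show ?thesis using L_c c earnings_mono_after_T[of c s] by (simp add: barrier_strategy_after_T)
    qed
  qed
  then show "payoff r k mb mu x L \<le> ennreal (x - X + exp (- r * T) * V0)"
    using payoff_never_bankrupt[OF barrier_strategy_admissible[OF \<open>X \<le> x\<close>] r bankruptcy_barrier_strategy]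
      payoff_barrier_strategy[OF \<open>X \<le> x\<close>]
    by simp
qed

text \<open>A strategy going bankrupt before tau0 only pays while the earnings are still nonpositive.\<close>
lemma payoff_le_if_bankrupt_before_tau0:
  assumes adm: "admissible k mb mu x L" and bankrupt: "bankruptcy k mb mu x L < ereal T"
  shows "payoff r k mb mu x L \<le> ennreal x"
proof -
  have "payoff r k mb mu x L \<le> discounted r (\<lambda>_. x)"
  proof (rule payoff_le_discounted[OF adm k r])
    fix c s
    assume "0 \<le> c" "ereal c \<le> bankruptcy k mb mu x L" "L c \<le> x + I c"
    moreover from this(2) bankrupt have "ereal c < ereal T" by (rule le_less_trans)
    ultimately show "L c \<le> x" using earnings_nonpos_before_T[of c] by simp
  qed
  then show ?thesis using discounted_const[OF r] by simp
qed

lemma value_fn_below_xb: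
  assumes "0 \<le> x" "x < X"
  shows "value_fn r k mb x mu = ennreal x"
proof (rule antisym)
  show "value_fn r k mb x mu \<le> ennreal x"
    using payoff_le_if_survives_tau0(1) payoff_le_if_bankrupt_before_tau0 assms
    by (intro value_fn_le) (meson not_le)
  show "ennreal x \<le> value_fn r k mb x mu"
    using payoff_le_value_fn[OF liquidation(1)[OF assms(1)], of r] liquidation(2)[OF assms(1)] by simp
qed

lemma value_fn_above_xb:
  assumes "X \<le> x"
  shows "value_fn r k mb x mu = ennreal (x + max 0 (exp (- r * T) * V0 - X))"
proof -
  have "0 \<le> x" using assms xb_pos by simp
  have "max x (x - X + exp (- r * T) * V0) = x + max 0 (exp (- r * T) * V0 - X)"
    by (simp add: max_def)
  moreover have "value_fn r k mb x mu = ennreal (max x (x - X + exp (- r * T) * V0))"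
  proof (rule antisym)
    show "value_fn r k mb x mu \<le> ennreal (max x (x - X + exp (- r * T) * V0))"
    proof (rule value_fn_le)
      fix L assume adm: "admissible k mb mu x L"
      show "payoff r k mb mu x L \<le> ennreal (max x (x - X + exp (- r * T) * V0))"
      proof (cases "ereal T \<le> bankruptcy k mb mu x L")
        case True
        then show ?thesis using payoff_le_if_survives_tau0(2)[OF \<open>0 \<le> x\<close> adm]
          by (meson ennreal_leI max.cobounded2 order_trans)
      next
        case False
        then show ?thesis using payoff_le_if_bankrupt_before_tau0[OF adm]
          by (meson ennreal_leI max.cobounded1 not_le order_trans)
      qed
    qed
    show "ennreal (max x (x - X + exp (- r * T) * V0)) \<le> value_fn r k mb x mu"
      using payoff_le_value_fn[OF liquidation(1)[OF \<open>0 \<le> x\<close>], of r] liquidation(2)[OF \<open>0 \<le> x\<close>]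
        payoff_le_value_fn[OF barrier_strategy_admissible[OF assms], of r] payoff_barrier_strategy[OF assms]
      by (simp add: max_def)
  qed
  ultimately show ?thesis by simp
qed

lemma value_fn_eq_liquidation:
  assumes "0 \<le> x" "exp (- r * T) * V0 \<le> X"
  shows "value_fn r k mb x mu = ennreal x"
  using value_fn_below_xb value_fn_above_xb assms by (cases "x < X") auto

lemma barrier_strategy_optimal:
  assumes "X \<le> x" "X \<le> exp (- r * T) * V0"
  shows "payoff r k mb mu x (barrier_strategy k mb mu x) = value_fn r k mb x mu"
  using payoff_barrier_strategy value_fn_above_xb assms by (simp add: algebra_simps)

end

lemma value_fn_zero_zero:
  fixes k mb r :: real
  assumes "k > 0" "mb > 0" "r > 0"
  shows "enn2real (value_fn r k mb 0 0) = mb / r - mb / (r + k)"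
  using value_fn_nonneg_profitability(3)[OF assms, of 0 0] value_at_zero_pos[OF assms] by simp

lemma value_fn_negative_profitability:
  fixes k mb r :: real
  assumes "k > 0" "mb > 0" "r > 0" "mu < 0" "0 \<le> x"
  shows "x < xb k mb mu \<Longrightarrow> value_fn r k mb x mu = ennreal x"
    and "xb k mb mu \<le> x \<Longrightarrow> value_fn r k mb x mu =
      ennreal (x + max 0 (exp (- r * tau0 k mb mu) * enn2real (value_fn r k mb 0 0) - xb k mb mu))"
proof -
  interpret negative_profitability k mb r mu
    using assms by unfold_locales
  show "x < X \<Longrightarrow> value_fn r k mb x mu = ennreal x"
    using value_fn_below_xb assms(5) by simp
  show "X \<le> x \<Longrightarrow> value_fn r k mb x mu = ennreal (x + max 0 (exp (- r * T) * enn2real (value_fn r k mb 0 0) - X))"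
    using value_fn_above_xb value_fn_zero_zero[OF k mb r] by simp
qed

section \<open>The liquidation threshold\<close>

text \<open>For m < 0 this is exp (-r tau0) V(0,0) - xb (see barrier_premium_eq), written in a form
  that extends continuously to m = 0.\<close>
definition barrier_premium :: "real \<Rightarrow> real \<Rightarrow> real \<Rightarrow> real \<Rightarrow> real" where
  "barrier_premium k mb r m =
     exp (- r / k * ln ((mb - m) / mb)) * (mb / r - mb / (r + k)) + (mb * ln ((mb - m) / mb) + m) / k"

lemma barrier_premium_eq:
  "m < 0 \<Longrightarrow> barrier_premium k mb r m = exp (- r * tau0 k mb m) * (mb / r - mb / (r + k)) - xb k mb m"
  by (simp add: barrier_premium_def tau0_def xb_def add_divide_distrib)

lemma barrier_premium_0: "barrier_premium k mb r 0 = mb / r - mb / (r + k)"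
  by (simp add: barrier_premium_def)

lemma barrier_premium_mono:
  fixes k mb r :: real
  assumes k: "0 < k" and mb: "0 < mb" and r: "0 < r" and m: "m1 \<le> m2" "m2 \<le> 0"
  shows "barrier_premium k mb r m1 \<le> barrier_premium k mb r m2"
proof -
  let ?q = "\<lambda>m. (mb - m) / mb"
  have "ln (?q m2) \<le> ln (?q m1)"
    using m mb by (simp add: divide_right_mono)
  then have "- r / k * ln (?q m1) \<le> - r / k * ln (?q m2)"
    using r k by (intro mult_left_mono_neg) auto
  then have discount: "exp (- r / k * ln (?q m1)) * (mb / r - mb / (r + k))
      \<le> exp (- r / k * ln (?q m2)) * (mb / r - mb / (r + k))"
    using value_at_zero_pos[OF k mb r] by simp
  have "(\<lambda>m. mb * ln (?q m) + m) m1 \<le> (\<lambda>m. mb * ln (?q m) + m) m2"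
  proof (rule DERIV_nonneg_imp_nondecreasing[OF m(1)])
    fix m assume "m1 \<le> m" "m \<le> m2"
    then have "m \<le> 0" using m by simp
    have "((\<lambda>m. mb * ln (?q m) + m) has_real_derivative - m / (mb - m)) (at m)"
      using \<open>m \<le> 0\<close> mb by (auto intro!: derivative_eq_intros simp: field_simps)
    moreover have "0 \<le> - m / (mb - m)" using \<open>m \<le> 0\<close> mb by (simp add: divide_nonpos_pos)
    ultimately show "\<exists>y. ((\<lambda>m. mb * ln (?q m) + m) has_real_derivative y) (at m) \<and> 0 \<le> y" by blast
  qed
  then have "(mb * ln (?q m1) + m1) / k \<le> (mb * ln (?q m2) + m2) / k"
    using k by (simp add: divide_right_mono)
  with discount show ?thesis unfolding barrier_premium_def by linarith
qed

lemma barrier_premium_eventually_neg: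
  fixes k mb r :: real
  assumes k: "0 < k" and mb: "0 < mb" and r: "0 < r"
  shows "eventually (\<lambda>m. barrier_premium k mb r m < 0) at_bot"
proof -
  let ?V0 = "mb / r - mb / (r + k)"
  have "filterlim (\<lambda>m. (mb * ln ((mb - m) / mb) + m) / k) at_bot at_bot"
    using k mb by real_asymp
  then have "eventually (\<lambda>m. (mb * ln ((mb - m) / mb) + m) / k < - ?V0) at_bot"
    by (simp add: filterlim_at_bot_dense)
  moreover have "eventually (\<lambda>m::real. m \<le> 0) at_bot"
    by simp
  ultimately show ?thesis
  proof eventually_elim
    case (elim m)
    then have "exp (- r / k * ln ((mb - m) / mb)) \<le> 1"
      using k r mb by (simp add: mult_nonneg_nonneg divide_nonneg_pos)
    then have "exp (- r / k * ln ((mb - m) / mb)) * ?V0 \<le> ?V0"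
      using value_at_zero_pos[OF k mb r] by simp
    then show ?case using elim unfolding barrier_premium_def by linarith
  qed
qed

text \<open>The liquidation threshold mu* is a zero of the premium, which exists by the intermediate
  value theorem since the premium is positive at 0 and tends to -\<infinity>.\<close>
lemma barrier_premium_zero_exists:
  fixes k mb r :: real
  assumes k: "0 < k" and mb: "0 < mb" and r: "0 < r"
  obtains mustar where "mustar < 0" "barrier_premium k mb r mustar = 0"
proof -
  have "eventually (\<lambda>m. barrier_premium k mb r m < 0 \<and> m \<le> -1) at_bot"
    using barrier_premium_eventually_neg[OF k mb r] by (rule eventually_conj) simp
  then obtain m1 where m1: "barrier_premium k mb r m1 < 0" "m1 \<le> -1"
    using eventually_happens'[OF trivial_limit_at_bot_linorder] by blast
  have "continuous_on {m1..0} (barrier_premium k mb r)"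
    unfolding barrier_premium_def using mb k by (intro continuous_intros) auto
  then obtain mustar where "m1 \<le> mustar" "mustar \<le> 0" "barrier_premium k mb r mustar = 0"
    using IVT'[of "barrier_premium k mb r" m1 0 0] m1 value_at_zero_pos[OF k mb r] barrier_premium_0
    by auto
  moreover have "mustar \<noteq> 0"
    using calculation(3) value_at_zero_pos[OF k mb r] barrier_premium_0 by auto
  ultimately show ?thesis using that by force
qed

lemma barrier_strategy_nonneg_profitability:
  "0 \<le> mu \<Longrightarrow> barrier_strategy k mb mu x = (\<lambda>t. if t < 0 then 0 else x + integral {0..t} (mu_path k mb mu))"
  by (auto simp: fun_eq_iff barrier_strategy_def xb_def tau0_def min_def)

lemma liquidation_threshold:
  fixes k mb r :: real
  assumes k: "k > 0" and mb: "mb > 0" and r: "r > 0"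
  shows "\<exists>mustar < 0.
    (\<forall>mu x. mu \<le> mustar \<and> x \<ge> 0 \<longrightarrow> value_fn r k mb x mu = ennreal x) \<and>
    (\<forall>mu x. mu \<ge> mustar \<and> x \<ge> xb k mb mu \<longrightarrow>
      admissible k mb mu x (barrier_strategy k mb mu x) \<and>
      payoff r k mb mu x (barrier_strategy k mb mu x) = value_fn r k mb x mu)"
proof -
  obtain mustar where mustar: "mustar < 0" "barrier_premium k mb r mustar = 0"
    using barrier_premium_zero_exists[OF k mb r] .
  have "value_fn r k mb x mu = ennreal x" if "mu \<le> mustar" "0 \<le> x" for mu x
  proof -
    have "mu < 0" using that mustar by simp
    then interpret negative_profitability k mb r mu
      using k mb r by unfold_locales
    have "barrier_premium k mb r mu \<le> 0"
      using barrier_premium_mono[OF k mb r \<open>mu \<le> mustar\<close>] mustar by simp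
    then show ?thesis
      using value_fn_eq_liquidation[OF \<open>0 \<le> x\<close>] barrier_premium_eq[OF mu] by simp
  qed
  moreover have "admissible k mb mu x (barrier_strategy k mb mu x) \<and>
      payoff r k mb mu x (barrier_strategy k mb mu x) = value_fn r k mb x mu"
    if "mustar \<le> mu" "xb k mb mu \<le> x" for mu x
  proof (cases "mu < 0")
    case True
    interpret negative_profitability k mb r mu
      using k mb r True by unfold_locales
    have "0 \<le> barrier_premium k mb r mu"
      using barrier_premium_mono[OF k mb r \<open>mustar \<le> mu\<close>] mustar True by simp
    then show ?thesis
      using barrier_strategy_admissible barrier_strategy_optimal barrier_premium_eq[OF True]
        \<open>xb k mb mu \<le> x\<close> by simp
  next
    case False
    then have "0 \<le> mu" "0 \<le> x" using \<open>xb k mb mu \<le> x\<close> by (simp_all add: xb_def)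
    then show ?thesis
      using value_fn_nonneg_profitability[OF k mb r] barrier_strategy_nonneg_profitability by simp
  qed
  ultimately show ?thesis
    using \<open>mustar < 0\<close> by blast
qed

theorem theorem5p1:
  fixes k mb r :: real
  assumes "k > 0" and "mb > 0" and "r > 0"
  shows
    "(\<forall>mu x. mu \<ge> 0 \<and> x \<ge> 0 \<longrightarrow>
        value_fn r k mb x mu = ennreal (x + mb / r + (mu - mb) / (r + k)) \<and>
        admissible k mb mu x (\<lambda>t. if t < 0 then 0 else x + integral {0..t} (mu_path k mb mu)) \<and>
        payoff r k mb mu x (\<lambda>t. if t < 0 then 0 else x + integral {0..t} (mu_path k mb mu))
          = value_fn r k mb x mu)
     \<and> (\<forall>mu x. mu < 0 \<and> x \<ge> 0 \<longrightarrow>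
        (x < xb k mb mu \<longrightarrow> value_fn r k mb x mu = ennreal x) \<and>
        (x \<ge> xb k mb mu \<longrightarrow> value_fn r k mb x mu =
            ennreal (x + max 0 (exp (- r * tau0 k mb mu) * enn2real (value_fn r k mb 0 0) - xb k mb mu))))
     \<and> (\<exists>mustar < 0.
        (\<forall>mu x. mu \<le> mustar \<and> x \<ge> 0 \<longrightarrow> value_fn r k mb x mu = ennreal x) \<and>
        (\<forall>mu x. mu \<ge> mustar \<and> x \<ge> xb k mb mu \<longrightarrow>
            admissible k mb mu x (barrier_strategy k mb mu x) \<and>
            payoff r k mb mu x (barrier_strategy k mb mu x) = value_fn r k mb x mu))"
  using value_fn_nonneg_profitability[OF assms] value_fn_negative_profitability[OF assms]
    liquidation_threshold[OF assms]
  by auto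

end
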